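(* Let $A,W\in \mathbb{C}^{n\times n}$. Then $A^{\mathrm{cEP},W}=(A^{D,W})^2(A^{D,W})^{(1,3)_W}$.
   Context: $\mathbb{C}^{n\times n}$ carries the conjugate transpose involution. With $k=\max\{\mathrm{ind}(AW),\mathrm{ind}(WA)\}$, the weighted core-EP inverse $A^{\mathrm{cEP},W}$ is the unique $X$ with $WAWX=(WA)^k[(WA)^k]^{\dagger}$ and $\mathcal{R}(X)\subseteq\mathcal{R}((AW)^k)$. $A^{D,W}$ is the $W$-weighted Drazin inverse of $A$. A weighted $(1,3,W)$-inverse of $B$ is any $X$ with $B=BWXWB$ and $(WBWX)^*=WBWX$, denoted $B^{(1,3)_W}$. *)

theory Defs
  imports "HOL-Analysis.Analysis"
begin

definition cadj :: "complex^'n^'m \<Rightarrow> complex^'m^'n" where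
  "cadj A = (\<chi> i j. cnj (A $ j $ i))"

definition mpow :: "complex^'n^'n \<Rightarrow> nat \<Rightarrow> complex^'n^'n" where
  "mpow A k = (((\<lambda>M. A ** M) ^^ k) (mat 1))"

definition mrange :: "complex^'n^'m \<Rightarrow> (complex^'m) set" where
  "mrange A = range (\<lambda>v. A *v v)"

definition ind :: "complex^'n^'n \<Rightarrow> nat" where
  "ind A = (LEAST k. mrange (mpow A k) = mrange (mpow A (Suc k)))"

definition is_MP :: "complex^'n^'n \<Rightarrow> complex^'n^'n \<Rightarrow> bool" where
  "is_MP A X \<longleftrightarrow> A ** X ** A = A \<and> X ** A ** X = X \<and>
     cadj (A ** X) = A ** X \<and> cadj (X ** A) = X ** A"

definition mp_inv :: "complex^'n^'n \<Rightarrow> complex^'n^'n" where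
  "mp_inv A = (THE X. is_MP A X)"

definition is_wdrazin :: "complex^'n^'n \<Rightarrow> complex^'n^'n \<Rightarrow> complex^'n^'n \<Rightarrow> bool" where
  "is_wdrazin A W X \<longleftrightarrow>
     mpow (A ** W) (Suc (ind (A ** W))) ** X ** W = mpow (A ** W) (ind (A ** W)) \<and>
     X ** W ** A ** W ** X = X \<and> A ** W ** X = X ** W ** A"

definition wdrazin :: "complex^'n^'n \<Rightarrow> complex^'n^'n \<Rightarrow> complex^'n^'n" where
  "wdrazin A W = (THE X. is_wdrazin A W X)"

definition is_wcoreEP :: "complex^'n^'n \<Rightarrow> complex^'n^'n \<Rightarrow> complex^'n^'n \<Rightarrow> bool" where
  "is_wcoreEP A W X \<longleftrightarrow>
     (let k = max (ind (A ** W)) (ind (W ** A)) in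
       W ** A ** W ** X = mpow (W ** A) k ** mp_inv (mpow (W ** A) k) \<and>
       mrange X \<subseteq> mrange (mpow (A ** W) k))"

definition wcoreEP :: "complex^'n^'n \<Rightarrow> complex^'n^'n \<Rightarrow> complex^'n^'n" where
  "wcoreEP A W = (THE X. is_wcoreEP A W X)"

definition is_w13 :: "complex^'n^'n \<Rightarrow> complex^'n^'n \<Rightarrow> complex^'n^'n \<Rightarrow> bool" where
  "is_w13 B W X \<longleftrightarrow> B = B ** W ** X ** W ** B \<and>
     cadj (W ** B ** W ** X) = W ** B ** W ** X"

end

theory Submission
  imports Defs
begin

(* Let D be the W-weighted Drazin inverse of A, Y = DWDWX and k = max (ind AW) (ind WA).
   Then DW is the Drazin inverse of AW and WD that of WA; since DW = (AW)^k (DW)^(k+1),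
   Y = DW (DWX) lies in R((AW)^k). The (1,3,W) conditions say that S = WDWX is Hermitian
   with S (WD) = WD; together with WD = (WA)^k (WD)^(k+1) this makes S the orthogonal
   projector onto R((WA)^k), i.e. S = (WA)^k ((WA)^k)^+, and WAWY = S. Finally, the
   weighted core-EP inverse is unique because (AW)^2 is injective on R((AW)^k). *)

lemma matrix_diff_ldistrib: "(A::complex^'n^'m) ** (B - C) = A ** B - A ** C"
  by (simp add: matrix_matrix_mult_def vec_eq_iff sum_subtractf algebra_simps)

lemma mpow_0 [simp]: "mpow A 0 = mat 1"
  by (simp add: mpow_def)

lemma mpow_Suc: "mpow A (Suc k) = A ** mpow A k"
  by (simp add: mpow_def)

lemma mpow_add: "mpow A (m + n) = mpow A m ** mpow A n"
  by (induction m) (simp_all add: mpow_Suc matrix_mul_assoc)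

lemma mpow_Suc_right: "mpow A (Suc k) = mpow A k ** A"
  using mpow_add[of A k 1] by (simp add: mpow_Suc)

lemma mpow_1 [simp]: "mpow A 1 = A"
  by (simp add: mpow_Suc)

lemma mult_mpow_commute: "A ** mpow A k = mpow A k ** A"
  by (metis mpow_Suc mpow_Suc_right)

lemma mpow_commute: "A ** B = B ** A \<Longrightarrow> mpow A k ** B = B ** mpow A k"
  by (induction k) (simp_all add: mpow_Suc, metis matrix_mul_assoc)

lemma mpow_commute_mpow: "A ** B = B ** A \<Longrightarrow> mpow A j ** mpow B k = mpow B k ** mpow A j"
  by (metis mpow_commute)

lemma transpose_mpow: "transpose (mpow A k) = mpow (transpose A) k"
  by (induction k)
    (simp_all add: mpow_Suc mpow_Suc_right matrix_transpose_mul mult_mpow_commute)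

lemma mpow_Suc_mult_swap: "mpow (W ** A) (Suc n) = W ** mpow (A ** W) n ** A"
proof (induction n)
  case (Suc n)
  have "mpow (W ** A) (Suc (Suc n)) = W ** A ** (W ** mpow (A ** W) n ** A)"
    by (simp only: mpow_Suc[of "W ** A" "Suc n"] Suc)
  then show ?case
    by (simp add: mpow_Suc matrix_mul_assoc)
qed (simp add: mpow_Suc)

lemma mpow_right_chain:
  assumes "mpow a k = mpow a (Suc k) ** z"
  shows "mpow a k = mpow a (k + j) ** mpow z j"
proof (induction j)
  case (Suc j)
  have "mpow a (k + Suc j) = mpow a j ** mpow a (Suc k)"
    by (metis add_Suc_right add_Suc_shift add.commute mpow_add)
  then have "mpow a (k + Suc j) ** mpow z (Suc j) = mpow a j ** (mpow a (Suc k) ** z) ** mpow z j"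
    by (simp only: mpow_Suc[of z] matrix_mul_assoc)
  also have "\<dots> = mpow a (k + j) ** mpow z j"
    using mpow_add[of a j k] by (simp add: assms[symmetric] add.commute)
  finally show ?case
    using Suc by simp
qed simp

lemma mpow_left_chain:
  assumes "mpow a k = y ** mpow a (Suc k)"
  shows "mpow a k = mpow y j ** mpow a (k + j)"
proof (induction j)
  case (Suc j)
  have "mpow a (k + Suc j) = mpow a (Suc k) ** mpow a j"
    using mpow_add[of a "Suc k" j] by simp
  then have "mpow y (Suc j) ** mpow a (k + Suc j) = mpow y j ** (y ** mpow a (Suc k)) ** mpow a j"
    by (simp only: mpow_Suc_right[of y] matrix_mul_assoc)
  also have "\<dots> = mpow y j ** mpow a (k + j)"
    using mpow_add[of a k j] by (simp add: assms[symmetric] matrix_mul_assoc)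
  finally show ?case
    using Suc by simp
qed simp

lemma mrange_mult_subset: "mrange (M ** N) \<subseteq> mrange M"
  unfolding mrange_def by (auto simp flip: matrix_vector_mul_assoc)

lemma mrange_mult: "mrange (M ** N) = (\<lambda>v. M *v v) ` mrange N"
  unfolding mrange_def by (auto simp flip: matrix_vector_mul_assoc)

lemma mrange_subset_imp_factor:
  fixes M :: "complex^'n^'m" and N :: "complex^'p^'m"
  assumes "mrange N \<subseteq> mrange M"
  obtains U where "N = M ** U"
proof -
  have "\<forall>j. \<exists>u. N *v axis j 1 = M *v u"
    using assms unfolding mrange_def by blast
  then obtain u where u: "\<And>j. N *v axis j 1 = M *v u j"
    by metis
  have "N $ i $ j = (M ** (\<chi> l j. u j $ l)) $ i $ j" for i j
  proof -
    have "N $ i $ j = (N *v axis j 1) $ i"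
      by (simp add: matrix_vector_mult_def axis_def if_distrib cong: if_cong)
    also have "\<dots> = (M ** (\<chi> l j. u j $ l)) $ i $ j"
      by (simp only: u) (simp add: matrix_vector_mult_def matrix_matrix_mult_def)
    finally show ?thesis .
  qed
  then have "N = M ** (\<chi> l j. u j $ l)"
    by (simp add: vec_eq_iff)
  then show ?thesis
    by (rule that)
qed

lemma subspace_mrange: "subspace (mrange (M::complex^'n^'m))"
  unfolding subspace_def mrange_def
proof (intro conjI ballI allI)
  show "0 \<in> range ((*v) M)"
    by (metis matrix_vector_mult_0_right rangeI)
  fix x y
  assume "x \<in> range ((*v) M)" "y \<in> range ((*v) M)"
  then show "x + y \<in> range ((*v) M)"
    by (auto simp flip: matrix_vector_right_distrib)
next
  fix c :: real and x
  assume "x \<in> range ((*v) M)"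
  then obtain v where v: "x = M *v v"
    by auto
  have "scaleR c x = M *v (scaleR c v)"
    by (simp add: v vec_eq_iff matrix_vector_mult_def scaleR_sum_right)
  then show "scaleR c x \<in> range ((*v) M)"
    by auto
qed

lemma mrange_mpow_stabilizes:
  "\<exists>k. mrange (mpow (M::complex^'n^'n) k) = mrange (mpow M (Suc k))"
proof (rule ccontr)
  assume "\<not> ?thesis"
  then have "mrange (mpow M (Suc k)) \<subset> mrange (mpow M k)" for k
    using mrange_mult_subset[of "mpow M k" M] by (auto simp: mpow_Suc_right)
  then have dim_less: "dim (mrange (mpow M (Suc k))) < dim (mrange (mpow M k))" for k
    by (intro dim_psubset) (simp add: span_eq_iff[THEN iffD2, OF subspace_mrange])
  have "dim (mrange (mpow M k)) + k \<le> dim (mrange (mpow M 0))" for k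
  proof (induction k)
    case (Suc k)
    then show ?case
      using dim_less[of k] by simp
  qed simp
  from this[of "Suc (dim (mrange (mpow M 0)))"] show False
    by simp
qed

lemma mpow_factor_right:
  fixes M :: "complex^'n^'n"
  assumes "ind M \<le> k"
  obtains U where "mpow M k = mpow M (Suc k) ** U"
proof -
  have "mrange (mpow M k) = mrange (mpow M (Suc k))"
    using assms
  proof (induction k rule: dec_induct)
    case base
    show ?case
      unfolding ind_def by (rule LeastI_ex[OF mrange_mpow_stabilizes])
  next
    case (step i)
    then show ?case
      by (metis mpow_Suc mrange_mult)
  qed
  then show ?thesis
    using that mrange_subset_imp_factor by blast
qed

section \<open>The Drazin inverse\<close>

text \<open>The exponent \<open>k\<close> is a parameter: for every \<open>k \<ge> ind a\<close> these conditions characterise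
  the same matrix, the Drazin inverse of \<open>a\<close>.\<close>

definition is_drazin :: "complex^'n^'n \<Rightarrow> nat \<Rightarrow> complex^'n^'n \<Rightarrow> bool" where
  "is_drazin a k d \<longleftrightarrow> mpow a (Suc k) ** d = mpow a k \<and> d ** a ** d = d \<and> a ** d = d ** a"

lemma is_drazin_mpow_commute: "is_drazin a k d \<Longrightarrow> mpow a j ** d = d ** mpow a j"
  unfolding is_drazin_def by (simp add: mpow_commute)

lemma is_drazin_from_factorizations:
  assumes r: "mpow a p = mpow a (Suc p) ** x" and l: "mpow a p = y ** mpow a (Suc p)"
  shows "is_drazin a p (mpow a p ** mpow x (Suc p))"
proof -
  define d where "d = mpow a p ** mpow x (Suc p)"
  have R: "mpow a p = mpow a (p + Suc p) ** mpow x (Suc p)"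
    by (rule mpow_right_chain[OF r])
  have L: "mpow a p = mpow y (Suc p) ** mpow a (p + Suc p)"
    by (rule mpow_left_chain[OF l])
  have d_left: "d = mpow y (Suc p) ** mpow a p"
    unfolding d_def by (subst (2) R) (simp only: matrix_mul_assoc L[symmetric])
  have pp: "mpow a (Suc p) ** mpow a p = mpow a (p + Suc p)"
    by (metis mpow_add add.commute)
  have "mpow a (Suc p) ** d = mpow a p"
    unfolding d_def by (simp only: matrix_mul_assoc pp R[symmetric])
  moreover have "a ** d = d ** a"
  proof -
    have a_ap: "a ** mpow a p = mpow a (p + Suc p) ** a ** mpow x (Suc p)"
      by (metis R matrix_mul_assoc mult_mpow_commute)
    have "d ** a = mpow y (Suc p) ** (a ** mpow a p)"
      by (simp add: d_left matrix_mul_assoc mult_mpow_commute)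
    also have "\<dots> = mpow y (Suc p) ** (mpow a (p + Suc p) ** a ** mpow x (Suc p))"
      by (simp only: a_ap)
    also have "\<dots> = mpow a p ** a ** mpow x (Suc p)"
      by (simp only: matrix_mul_assoc L[symmetric])
    also have "\<dots> = a ** d"
      by (simp add: d_def matrix_mul_assoc mult_mpow_commute)
    finally show ?thesis
      by simp
  qed
  moreover have "d ** a ** d = d"
  proof -
    have "mpow a p ** a ** mpow a p = mpow a (p + Suc p)"
      by (metis mpow_Suc_right pp)
    then have "mpow y (Suc p) ** mpow a p ** a ** (mpow a p ** mpow x (Suc p))
        = mpow y (Suc p) ** (mpow a (p + Suc p) ** mpow x (Suc p))"
      by (metis matrix_mul_assoc)
    also have "\<dots> = mpow y (Suc p) ** mpow a p"
      by (simp only: R[symmetric])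
    finally have "mpow y (Suc p) ** mpow a p ** a ** (mpow a p ** mpow x (Suc p))
        = mpow y (Suc p) ** mpow a p" .
    then show ?thesis
      by (metis d_left d_def)
  qed
  ultimately show ?thesis
    unfolding is_drazin_def d_def by simp
qed

lemma is_drazin_lower:
  assumes d: "is_drazin a p d" and z: "mpow a k = mpow a (Suc k) ** z" and "k \<le> p"
  shows "is_drazin a k d"
proof -
  obtain w where w: "mpow a k = mpow a (Suc p) ** w"
    using mpow_right_chain[OF z, of "Suc p - k"] \<open>k \<le> p\<close> by auto
  have "mpow a (Suc k) ** d = d ** (a ** mpow a k)"
    by (simp only: is_drazin_mpow_commute[OF d]) (simp add: mpow_Suc)
  also have "\<dots> = d ** mpow a (Suc (Suc p)) ** w"
    by (simp add: w mpow_Suc matrix_mul_assoc)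
  also have "\<dots> = mpow a (Suc (Suc p)) ** d ** w"
    by (simp add: is_drazin_mpow_commute[OF d])
  also have "mpow a (Suc (Suc p)) ** d = mpow a (Suc p)"
    using d unfolding is_drazin_def by (metis mpow_Suc matrix_mul_assoc)
  finally show ?thesis
    using d w unfolding is_drazin_def by simp
qed

lemma is_drazin_mono:
  assumes d: "is_drazin a k d" and "k \<le> j"
  shows "is_drazin a j d"
proof -
  have "mpow a (Suc j) ** d = mpow a (j - k) ** (mpow a (Suc k) ** d)"
    using \<open>k \<le> j\<close> by (simp add: matrix_mul_assoc Suc_diff_le flip: mpow_add)
  also have "\<dots> = mpow a j"
    using d \<open>k \<le> j\<close> by (simp add: is_drazin_def flip: mpow_add)
  finally show ?thesis
    using d unfolding is_drazin_def by simp
qed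

lemma drazin_exists:
  fixes M :: "complex^'n^'n"
  obtains d where "is_drazin M (ind M) d"
proof -
  define p where "p = max (ind M) (ind (transpose M))"
  obtain x where x: "mpow M p = mpow M (Suc p) ** x"
    using mpow_factor_right[of M p] p_def by auto
  obtain x' where x': "mpow (transpose M) p = mpow (transpose M) (Suc p) ** x'"
    using mpow_factor_right[of "transpose M" p] p_def by auto
  have y: "mpow M p = transpose x' ** mpow M (Suc p)"
    using arg_cong[OF x', of transpose] by (simp add: matrix_transpose_mul flip: transpose_mpow)
  obtain z where z: "mpow M (ind M) = mpow M (Suc (ind M)) ** z"
    using mpow_factor_right[of M "ind M"] by blast
  show ?thesis
    using is_drazin_lower[OF is_drazin_from_factorizations[OF x y] z] p_def that by auto
qed

lemma is_drazin_eq_mpow_right: "is_drazin a k d \<Longrightarrow> d = mpow d (Suc j) ** mpow a j"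
proof (induction j)
  case (Suc j)
  then have "d = d ** d ** a"
    unfolding is_drazin_def by (metis matrix_mul_assoc)
  then have "mpow d (Suc j) ** mpow a j = mpow d (Suc (Suc j)) ** mpow a (Suc j)"
    by (metis mpow_Suc mpow_Suc_right matrix_mul_assoc)
  then show ?case
    using Suc by simp
qed (simp add: mpow_Suc)

lemma is_drazin_eq_mpow_left: "is_drazin a k d \<Longrightarrow> d = mpow a j ** mpow d (Suc j)"
  by (metis is_drazin_def is_drazin_eq_mpow_right mpow_commute_mpow)

lemma is_drazin_unique:
  assumes d: "is_drazin a k d" and e: "is_drazin a k e"
  shows "d = e"
proof -
  have "d = mpow d (Suc k) ** mpow a k"
    by (rule is_drazin_eq_mpow_right[OF d])
  also have "\<dots> = mpow d (Suc k) ** (mpow a k ** a) ** e"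
    using e unfolding is_drazin_def mpow_Suc_right by (metis matrix_mul_assoc)
  also have "\<dots> = d ** a ** e"
    by (simp add: matrix_mul_assoc flip: is_drazin_eq_mpow_right[OF d])
  finally have dae: "d = d ** a ** e" .
  have "e = mpow a k ** mpow e (Suc k)"
    by (rule is_drazin_eq_mpow_left[OF e])
  also have "\<dots> = d ** (a ** mpow a k) ** mpow e (Suc k)"
    using d is_drazin_mpow_commute[OF d, of "Suc k"] unfolding is_drazin_def
    by (simp add: mpow_Suc)
  also have "\<dots> = d ** a ** e"
    by (metis is_drazin_eq_mpow_left[OF e] matrix_mul_assoc)
  finally show ?thesis
    using dae by simp
qed

lemma mpow_inj_on_range_mpow:
  fixes B :: "complex^'n^'n"
  assumes "ind B \<le> k" and "mpow B j ** mpow B k ** U = 0"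
  shows "mpow B k ** U = 0"
proof -
  obtain d where "is_drazin B (ind B) d"
    by (rule drazin_exists)
  then have d: "is_drazin B k d"
    using assms(1) by (rule is_drazin_mono)
  then have "mpow B k = d ** mpow B (Suc k)"
    using is_drazin_mpow_commute[OF d] unfolding is_drazin_def by metis
  then have "mpow B k = mpow d j ** mpow B (k + j)"
    by (rule mpow_left_chain)
  also have "mpow B (k + j) = mpow B j ** mpow B k"
    by (simp add: add.commute flip: mpow_add)
  finally show ?thesis
    using assms(2) by (metis matrix_mul_assoc times0_right)
qed

section \<open>The weighted Drazin inverse\<close>

lemma is_wdrazin_imp_is_drazin:
  assumes "is_wdrazin A W X"
  shows "is_drazin (A ** W) (ind (A ** W)) (X ** W)"
  using assms unfolding is_wdrazin_def is_drazin_def by (simp add: matrix_mul_assoc)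

lemma is_wdrazin_imp_is_drazin_swap:
  assumes X: "is_wdrazin A W X" and "ind (A ** W) \<le> k" and "ind (W ** A) \<le> k"
  shows "is_drazin (W ** A) k (W ** X)"
proof -
  define p where "p = ind (A ** W)"
  have XWA: "A ** W ** X = X ** W ** A" and XWAWX: "X ** W ** A ** W ** X = X"
    using X unfolding is_wdrazin_def by auto
  have "mpow (A ** W) (Suc p) ** (X ** W) = mpow (A ** W) p"
    using is_wdrazin_imp_is_drazin[OF X] unfolding is_drazin_def p_def by simp
  then have "mpow (W ** A) (Suc (Suc p)) ** (W ** X) = W ** mpow (A ** W) p ** A"
    by (subst mpow_Suc_mult_swap) (metis XWA matrix_mul_assoc)
  then have "mpow (W ** A) (Suc (Suc p)) ** (W ** X) = mpow (W ** A) (Suc p)"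
    by (simp only: mpow_Suc_mult_swap)
  moreover have "W ** X ** (W ** A) ** (W ** X) = W ** X"
    using XWAWX by (metis matrix_mul_assoc)
  moreover have "W ** A ** (W ** X) = W ** X ** (W ** A)"
    using XWA by (metis matrix_mul_assoc)
  ultimately have "is_drazin (W ** A) (Suc p) (W ** X)"
    unfolding is_drazin_def by simp
  then have "is_drazin (W ** A) (Suc k) (W ** X)"
    by (rule is_drazin_mono) (use assms(2) in \<open>simp add: p_def\<close>)
  moreover obtain U where "mpow (W ** A) k = mpow (W ** A) (Suc k) ** U"
    using mpow_factor_right[OF assms(3)] by blast
  ultimately show ?thesis
    by (rule is_drazin_lower) simp
qed

lemma wdrazin_exists: obtains X where "is_wdrazin A W X"
proof -
  \<comment> \<open>Cline's formula: the weighted Drazin inverse is \<open>((AW)\<^sup>D)\<^sup>2 A\<close>.\<close>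
  define B where "B = A ** W"
  define k where "k = ind B"
  obtain d where "is_drazin B k d"
    unfolding k_def by (rule drazin_exists)
  then have d1: "mpow B (Suc k) ** d = mpow B k" and d2: "d ** B ** d = d"
    and d3: "B ** d = d ** B"
    unfolding is_drazin_def by auto
  have "mpow B (Suc k) ** (d ** d ** A) ** W = mpow B k"
    using d1 d2 d3 by (simp add: B_def matrix_mul_assoc) (metis matrix_mul_assoc)
  moreover have "d ** d ** A ** W ** A ** W ** (d ** d ** A) = d ** d ** A"
    using d2 d3 by (simp add: B_def matrix_mul_assoc) (metis matrix_mul_assoc)
  moreover have "A ** W ** (d ** d ** A) = d ** d ** A ** W ** A"
    using d3 by (simp add: B_def matrix_mul_assoc) (metis matrix_mul_assoc)
  ultimately show ?thesis
    using that unfolding is_wdrazin_def B_def k_def by blast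
qed

lemma is_wdrazin_wdrazin: "is_wdrazin A W (wdrazin A W)"
proof -
  obtain X where X: "is_wdrazin A W X"
    by (rule wdrazin_exists)
  have unique: "Y = X" if Y: "is_wdrazin A W Y" for Y
  proof -
    have "Y ** W = X ** W"
      using is_drazin_unique is_wdrazin_imp_is_drazin[OF X] is_wdrazin_imp_is_drazin[OF Y]
      by metis
    moreover have "Z = Z ** W ** (Z ** W) ** A" if "is_wdrazin A W Z" for Z
      using that unfolding is_wdrazin_def by (metis matrix_mul_assoc)
    ultimately show "Y = X"
      using X Y by metis
  qed
  show ?thesis
    unfolding wdrazin_def by (rule theI[where P = "is_wdrazin A W", OF X unique])
qed

section \<open>Conjugate transposes and the Moore--Penrose inverse\<close>

lemma cadj_mult: "cadj (A ** B) = cadj B ** cadj A"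
  by (simp add: cadj_def matrix_matrix_mult_def vec_eq_iff mult.commute)

lemma cadj_cadj [simp]: "cadj (cadj A) = A"
  by (simp add: cadj_def vec_eq_iff)

lemma cadj_mat_1 [simp]: "cadj (mat 1 :: complex^'n^'n) = mat 1"
  by (simp add: cadj_def vec_eq_iff mat_def)

lemma cadj_mpow: "cadj (mpow A k) = mpow (cadj A) k"
  by (induction k) (simp_all add: mpow_Suc mpow_Suc_right cadj_mult mult_mpow_commute)

lemma cadj_mult_self_eq_0:
  fixes Y :: "complex^'n^'m"
  assumes "cadj Y ** Y = 0"
  shows "Y = 0"
proof -
  have "Y $ i $ j = 0" for i j
  proof -
    have "complex_of_real (\<Sum>l\<in>UNIV. (cmod (Y $ l $ j))\<^sup>2) = (cadj Y ** Y) $ j $ j"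
      unfolding cadj_def matrix_matrix_mult_def of_real_sum
      by (simp only: complex_norm_square) (simp add: mult.commute)
    also have "\<dots> = 0"
      using assms by simp
    finally have "(\<Sum>l\<in>UNIV. (cmod (Y $ l $ j))\<^sup>2) = 0"
      by (simp only: of_real_eq_0_iff)
    then show ?thesis
      by (simp add: sum_nonneg_eq_0_iff)
  qed
  then show ?thesis
    by (simp add: vec_eq_iff)
qed

lemma hermitian_mpow_Suc_mult_eq_0:
  assumes H: "cadj H = H" and "mpow H (Suc (Suc j)) ** Y = 0"
  shows "mpow H (Suc j) ** Y = 0"
proof (rule cadj_mult_self_eq_0)
  have "cadj (mpow H (Suc j) ** Y) ** (mpow H (Suc j) ** Y)
      = cadj Y ** (mpow H (Suc j) ** mpow H (Suc j)) ** Y"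
    by (simp add: cadj_mult cadj_mpow H matrix_mul_assoc)
  also have "mpow H (Suc j) ** mpow H (Suc j) = mpow H j ** mpow H (Suc (Suc j))"
    by (metis mpow_add add_Suc add_Suc_right)
  finally show "cadj (mpow H (Suc j) ** Y) ** (mpow H (Suc j) ** Y) = 0"
    using assms(2) by (metis matrix_mul_assoc times0_right)
qed

lemma hermitian_mpow_mult_eq_0:
  assumes H: "cadj H = H" and "mpow H (Suc j) ** Y = 0"
  shows "H ** Y = 0"
  using assms(2)
proof (induction j)
  case 0
  then show ?case
    by (simp add: mpow_Suc)
next
  case (Suc j)
  then show ?case
    using hermitian_mpow_Suc_mult_eq_0[OF H] by blast
qed

lemma is_drazin_cadj:
  assumes d: "is_drazin a k d"
  shows "is_drazin (cadj a) k (cadj d)"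
proof -
  have "mpow (cadj a) (Suc k) ** cadj d = cadj (mpow a (Suc k) ** d)"
    using is_drazin_mpow_commute[OF d] by (simp add: cadj_mult cadj_mpow)
  moreover have "cadj d ** cadj a ** cadj d = cadj (d ** a ** d)"
    by (simp add: cadj_mult matrix_mul_assoc)
  moreover have "cadj a ** cadj d = cadj d ** cadj a"
    using d unfolding is_drazin_def by (metis cadj_mult)
  ultimately show ?thesis
    using d unfolding is_drazin_def by (simp add: cadj_mpow)
qed

lemma hermitian_group_inverse:
  assumes H: "cadj H = H"
  obtains g where "is_drazin H 1 g"
proof -
  obtain d where d: "is_drazin H (ind H) d"
    by (rule drazin_exists)
  have "mpow H (Suc (ind H)) ** (mat 1 - H ** d)
      = mpow H (Suc (ind H)) - H ** (mpow H (Suc (ind H)) ** d)"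
    by (simp add: matrix_diff_ldistrib matrix_mul_assoc mult_mpow_commute)
  also have "\<dots> = 0"
    using d unfolding is_drazin_def by (simp add: mpow_Suc)
  finally have "mpow H (Suc (ind H)) ** (mat 1 - H ** d) = 0" .
  then have "H ** (mat 1 - H ** d) = 0"
    by (rule hermitian_mpow_mult_eq_0[OF H])
  then have "mpow H (Suc 1) ** d = mpow H 1"
    by (simp add: mpow_Suc matrix_diff_ldistrib matrix_mul_assoc)
  then show ?thesis
    using d that unfolding is_drazin_def by blast
qed

lemma mp_exists:
  fixes M :: "complex^'n^'n"
  obtains X where "is_MP M X"
proof -
  define H where "H = cadj M ** M"
  have H: "cadj H = H"
    by (simp add: H_def cadj_mult)
  obtain g where g: "is_drazin H 1 g"
    using hermitian_group_inverse[OF H] by blast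
  have HHg: "H ** H ** g = H" and gHg: "g ** H ** g = g" and gH: "H ** g = g ** H"
    using g unfolding is_drazin_def by (auto simp: mpow_Suc matrix_mul_assoc)
  have g_herm: "cadj g = g"
    using is_drazin_cadj[OF g] g unfolding H by (rule is_drazin_unique)
  have "H ** g ** H = H"
    using HHg gH by (metis matrix_mul_assoc)
  then have HgH: "H ** (mat 1 - g ** H) = 0"
    by (simp add: matrix_diff_ldistrib matrix_mul_assoc)
  have "cadj (M ** (mat 1 - g ** H)) ** (M ** (mat 1 - g ** H))
      = cadj (mat 1 - g ** H) ** (H ** (mat 1 - g ** H))"
    by (simp add: cadj_mult H_def matrix_mul_assoc)
  also have "\<dots> = 0"
    by (simp only: HgH times0_right)
  finally have "M ** (mat 1 - g ** H) = 0"
    by (rule cadj_mult_self_eq_0)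
  then have "M ** (g ** cadj M) ** M = M"
    by (simp add: matrix_diff_ldistrib H_def matrix_mul_assoc)
  moreover have "g ** cadj M ** M ** (g ** cadj M) = g ** cadj M"
    using gHg by (simp add: H_def matrix_mul_assoc)
  moreover have "cadj (M ** (g ** cadj M)) = M ** (g ** cadj M)"
    by (simp add: cadj_mult g_herm matrix_mul_assoc)
  moreover have "cadj (g ** cadj M ** M) = g ** cadj M ** M"
  proof -
    have "cadj (g ** H) = g ** H"
      using gH by (simp add: cadj_mult g_herm H)
    then show ?thesis
      by (simp add: H_def matrix_mul_assoc)
  qed
  ultimately show ?thesis
    using that unfolding is_MP_def by blast
qed

lemma mp_unique:
  assumes X: "is_MP M X" and Y: "is_MP M Y"
  shows "X = Y"
proof -
  have x1: "M ** X ** M = M" and x2: "X ** M ** X = X" and x3: "cadj (M ** X) = M ** X"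
    and x4: "cadj (X ** M) = X ** M"
    using X unfolding is_MP_def by auto
  have y1: "M ** Y ** M = M" and y2: "Y ** M ** Y = Y" and y3: "cadj (M ** Y) = M ** Y"
    and y4: "cadj (Y ** M) = Y ** M"
    using Y unfolding is_MP_def by auto
  have "X = X ** cadj (M ** X)"
    using x2 x3 by (simp add: matrix_mul_assoc)
  also have "\<dots> = X ** cadj X ** cadj (M ** Y ** M)"
    by (simp add: y1 cadj_mult matrix_mul_assoc)
  also have "\<dots> = X ** cadj (M ** X) ** cadj (M ** Y)"
    by (simp add: cadj_mult matrix_mul_assoc)
  also have "\<dots> = X ** M ** Y"
    by (simp add: x3 y3 x2 matrix_mul_assoc)
  finally have XMY: "X = X ** M ** Y" .
  have "Y = cadj (Y ** M) ** Y"
    using y2 y4 by simp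
  also have "\<dots> = cadj (M ** X ** M) ** cadj Y ** Y"
    by (simp add: x1 cadj_mult matrix_mul_assoc)
  also have "\<dots> = cadj (X ** M) ** cadj (Y ** M) ** Y"
    by (simp add: cadj_mult matrix_mul_assoc)
  also have "\<dots> = X ** M ** (Y ** M ** Y)"
    by (simp add: x4 y4 matrix_mul_assoc)
  also have "\<dots> = X ** M ** Y"
    by (simp add: y2)
  finally show ?thesis
    using XMY by simp
qed

lemma is_MP_mp_inv: "is_MP M (mp_inv M)"
proof -
  obtain X where "is_MP M X"
    by (rule mp_exists)
  then have "\<exists>!X. is_MP M X"
    using mp_unique by blast
  then show ?thesis
    unfolding mp_inv_def by (rule theI')
qed

lemma hermitian_projector_eq_mult_mp_inv:
  assumes P: "cadj P = P" and "P ** M = M" and "P = M ** Z"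
  shows "P = M ** mp_inv M"
proof -
  define Q where "Q = M ** mp_inv M"
  have "Q ** M = M" and Q: "cadj Q = Q"
    using is_MP_mp_inv[of M] unfolding is_MP_def Q_def by auto
  then have QP: "Q ** P = P"
    using assms(3) by (metis matrix_mul_assoc)
  have PQ: "P ** Q = Q"
    using assms(2) by (simp add: Q_def matrix_mul_assoc)
  have "P = cadj (Q ** P)"
    using QP P by simp
  also have "\<dots> = P ** Q"
    by (simp add: cadj_mult P Q)
  finally show ?thesis
    using PQ Q_def by simp
qed

section \<open>The weighted core-EP inverse\<close>

lemma is_wcoreEP_unique:
  assumes X: "is_wcoreEP A W X" and Y: "is_wcoreEP A W Y"
  shows "X = Y"
proof -
  define k where "k = max (ind (A ** W)) (ind (W ** A))"
  have eq: "W ** A ** W ** X = W ** A ** W ** Y"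
    and "mrange X \<subseteq> mrange (mpow (A ** W) k)" "mrange Y \<subseteq> mrange (mpow (A ** W) k)"
    using X Y unfolding is_wcoreEP_def Let_def k_def by auto
  then obtain U V where "X = mpow (A ** W) k ** U" "Y = mpow (A ** W) k ** V"
    by (metis mrange_subset_imp_factor)
  then have XY: "X - Y = mpow (A ** W) k ** (U - V)"
    by (simp add: matrix_diff_ldistrib)
  have "mpow (A ** W) 2 ** (X - Y) = A ** (W ** A ** W ** X - W ** A ** W ** Y)"
    by (simp add: numeral_2_eq_2 mpow_Suc matrix_diff_ldistrib matrix_mul_assoc)
  then have "mpow (A ** W) 2 ** mpow (A ** W) k ** (U - V) = 0"
    by (simp add: eq XY matrix_mul_assoc)
  then have "mpow (A ** W) k ** (U - V) = 0"
    by (rule mpow_inj_on_range_mpow[rotated]) (simp add: k_def)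
  then show ?thesis
    using XY by simp
qed

lemma wcoreEP_eqI:
  assumes "is_wcoreEP A W Y"
  shows "wcoreEP A W = Y"
  unfolding wcoreEP_def using assms by (rule the_equality) (rule is_wcoreEP_unique[OF _ assms])

lemma is_wcoreEP_wdrazin_formula:
  fixes A W X :: "complex^'n^'n"
  assumes "is_w13 (wdrazin A W) W X"
  shows "is_wcoreEP A W (wdrazin A W ** W ** wdrazin A W ** W ** X)"
proof -
  define D where "D = wdrazin A W"
  define k where "k = max (ind (A ** W)) (ind (W ** A))"
  define M where "M = mpow (W ** A) k"
  define S where "S = W ** D ** W ** X"
  have D: "is_wdrazin A W D"
    unfolding D_def by (rule is_wdrazin_wdrazin)
  have DWX: "D = D ** W ** X ** W ** D" and S: "cadj S = S"
    using assms unfolding is_w13_def D_def[symmetric] S_def by auto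
  have WD: "is_drazin (W ** A) k (W ** D)"
    by (rule is_wdrazin_imp_is_drazin_swap[OF D]) (simp_all add: k_def)
  have "S ** M = M"
  proof -
    have "S ** (W ** D) = W ** D"
      using DWX by (simp add: S_def matrix_mul_assoc) (metis matrix_mul_assoc)
    moreover have "M = W ** D ** mpow (W ** A) (Suc k)"
      using WD is_drazin_mpow_commute[OF WD] unfolding M_def is_drazin_def by metis
    ultimately show ?thesis
      by (metis matrix_mul_assoc)
  qed
  moreover have "S = M ** (mpow (W ** D) (Suc k) ** W ** X)"
    using is_drazin_eq_mpow_left[OF WD, of k]
    by (simp add: S_def M_def matrix_mul_assoc)
  ultimately have "S = M ** mp_inv M"
    using S by (intro hermitian_projector_eq_mult_mp_inv)
  moreover have "W ** A ** W ** (D ** W ** D ** W ** X) = S"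
    using D unfolding is_wdrazin_def S_def by (metis matrix_mul_assoc)
  moreover have "mrange (D ** W ** D ** W ** X) \<subseteq> mrange (mpow (A ** W) k)"
  proof -
    have "D ** W = mpow (A ** W) k ** mpow (D ** W) (Suc k)"
      by (rule is_drazin_eq_mpow_left[OF is_wdrazin_imp_is_drazin[OF D]])
    then show ?thesis
      by (metis matrix_mul_assoc mrange_mult_subset)
  qed
  ultimately show ?thesis
    unfolding is_wcoreEP_def Let_def M_def k_def D_def by simp
qed

theorem corollary4p5:
  fixes A W X :: "complex^'n^'n"
  assumes "is_w13 (wdrazin A W) W X"
  shows "wcoreEP A W = wdrazin A W ** W ** wdrazin A W ** W ** X"
  by (rule wcoreEP_eqI[OF is_wcoreEP_wdrazin_formula[OF assms]])

end
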